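(* Let $n$ be a positive integer and let $F=O\times\{0,n\}\subset\mathbb{Z}^3$ be the filler, where $O=\{-1,0,1\}^2\setminus\{(0,0)\}$. If $E\subset\mathbb{Z}^3$ contains some translate of $\{-1,0,1\}^2\times\{0\}$ as a subset, then $F$ does not tile $E$, i.e. there is no $W\subset\mathbb{Z}^3$ with $W\oplus F$ non-overlapping and $W\oplus F=E$.
   Context: $A\oplus B=\{a+b: a\in A, b\in B\}$; it is non-overlapping if each element arises from a unique pair $(a,b)$. *)

theory Defs
  imports Main
begin

type_synonym pt3 = "int \<times> int \<times> int"

definition add3 :: "pt3 \<Rightarrow> pt3 \<Rightarrow> pt3" where
  "add3 p q = (fst p + fst q, fst (snd p) + fst (snd q), snd (snd p) + snd (snd q))"

definition msum :: "pt3 set \<Rightarrow> pt3 set \<Rightarrow> pt3 set" where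
  "msum A B = {add3 a b | a b. a \<in> A \<and> b \<in> B}"

definition non_overlapping :: "pt3 set \<Rightarrow> pt3 set \<Rightarrow> bool" where
  "non_overlapping A B = (\<forall>a\<in>A. \<forall>b\<in>B. \<forall>a'\<in>A. \<forall>b'\<in>B.
      add3 a b = add3 a' b' \<longrightarrow> a = a' \<and> b = b')"

definition tiles :: "pt3 set \<Rightarrow> pt3 set \<Rightarrow> bool" where
  "tiles F E = (\<exists>W. non_overlapping W F \<and> msum W F = E)"

definition square3 :: "pt3 set" where
  "square3 = {(x, y, 0) | x y. x \<in> {-1..1} \<and> y \<in> {-1..1}}"

definition ring_O :: "(int \<times> int) set" where
  "ring_O = ({-1..1} \<times> {-1..1}) - {(0, 0)}"

definition filler :: "nat \<Rightarrow> pt3 set" where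
  "filler n = {(x, y, z) | x y z. (x, y) \<in> ring_O \<and> z \<in> {0, int n}}"

end

theory Submission
  imports Defs
begin

(* Since (0,0) is not in O, a translate w + F leaves the centre w + (0,0,z) of each of its layers
   uncovered. Another translate w' + (u,v,z') covering it would meet w + F in layer z: any d with d
   and d + (u,v) both in O gives w + (d,z) = w' + (d + (u,v), z'), contradicting non-overlap.
   A square {-1,0,1}^2 x {0} around a point w + (x,y,z) of E contains such a centre. *)

lemma mem_filler_iff [simp]:
  "(x, y, z) \<in> filler n \<longleftrightarrow> (x, y) \<in> ring_O \<and> z \<in> {0, int n}"
  by (auto simp: filler_def)

lemma ring_O_meets_shifted_ring_O:
  assumes "(u, v) \<in> ring_O"
  shows "\<exists>d e. (d, e) \<in> ring_O \<and> (d + u, e + v) \<in> ring_O"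
proof (cases "u = 0")
  case True
  then show ?thesis
    using assms by (intro exI[of _ 1] exI[of _ 0]) (auto simp: ring_O_def)
next
  case False
  then show ?thesis
    using assms by (intro exI[of _ "-u"] exI[of _ "if v = 0 then 1 else 0"]) (auto simp: ring_O_def)
qed

lemma layer_centre_notin_msum_filler:
  assumes non_overlap: "non_overlapping W (filler n)"
    and "w \<in> W" and z: "z \<in> {0, int n}"
  shows "add3 w (0, 0, z) \<notin> msum W (filler n)"
proof
  assume "add3 w (0, 0, z) \<in> msum W (filler n)"
  then obtain w' u v z' where "w' \<in> W" and uv: "(u, v) \<in> ring_O" and z': "z' \<in> {0, int n}"
    and centre: "add3 w (0, 0, z) = add3 w' (u, v, z')"
    unfolding msum_def filler_def by blast
  obtain d e where de: "(d, e) \<in> ring_O" "(d + u, e + v) \<in> ring_O"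
    using ring_O_meets_shifted_ring_O[OF uv] by blast
  have "add3 w (d, e, z) = add3 w' (d + u, e + v, z')"
    using centre by (auto simp: add3_def)
  then have "w = w'"
    using non_overlap \<open>w \<in> W\<close> \<open>w' \<in> W\<close> de z z'
    unfolding non_overlapping_def by (metis mem_filler_iff)
  with centre have "(u, v) = (0, 0)"
    by (auto simp: add3_def)
  with uv show False
    by (simp add: ring_O_def)
qed

theorem lemma4p2:
  fixes n :: nat and E :: "pt3 set"
  assumes "n > 0"
    and "\<exists>t. (\<lambda>p. add3 t p) ` square3 \<subseteq> E"
  shows "\<not> tiles (filler n) E"
proof
  assume "tiles (filler n) E"
  then obtain W where non_overlap: "non_overlapping W (filler n)" and E: "msum W (filler n) = E"
    unfolding tiles_def by blast
  obtain t where square: "(\<lambda>p. add3 t p) ` square3 \<subseteq> E"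
    using assms(2) by blast
  have "add3 t (0, 0, 0) \<in> E"
    using square by (auto simp: square3_def)
  then obtain w x y z where "w \<in> W" and xy: "(x, y) \<in> ring_O" and z: "z \<in> {0, int n}"
    and t: "add3 t (0, 0, 0) = add3 w (x, y, z)"
    unfolding E[symmetric] msum_def filler_def by blast
  have "add3 t (-x, -y, 0) \<in> E"
    using square xy by (auto simp: square3_def ring_O_def)
  moreover have "add3 t (-x, -y, 0) = add3 w (0, 0, z)"
    using t by (auto simp: add3_def)
  ultimately show False
    using layer_centre_notin_msum_filler[OF non_overlap \<open>w \<in> W\<close> z] E by simp
qed

end
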